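(* Let $G$ be a finite, connected, simple, bridgeless, triangle-free cubic graph, let $\Lambda$ be a valid labeling of $\mathfrak{L}_2(G)$, and let $\gamma_1,\gamma_2\in\Gamma_\Lambda$ be non-adjacent cycles. Then there are finitely many reduced cliques $\mathbb{X}_1,\dots,\mathbb{X}_n\in\mathcal{X}$ such that, with $\Lambda'=(\mathcal{F}_{\mathbb{X}_1}\circ\cdots\circ\mathcal{F}_{\mathbb{X}_n})(\Lambda)$, we have $\gamma_1,\gamma_2\in\Gamma_{\Lambda'}$ and there is a cycle $\gamma_3\in\Gamma_{\Lambda'}$ adjacent to both $\gamma_1$ and $\gamma_2$.
   Context: $\mathcal{L}(H)$ is the line graph of $H$. Let $\mathcal{T}$ be the set of triangles of $\mathcal{L}(\mathcal{L}(G))$ formed by the three edges of a triangle of $\mathcal{L}(G)$. $\mathfrak{L}_2(G)$ has the vertex set of $\mathcal{L}(\mathcal{L}(G))$ and the edges of $\mathcal{L}(\mathcal{L}(G))$ not in any triangle of $\mathcal{T}$. For each edge $e$ of $G$, the reduced clique $\mathbb{X}_e$ is the subgraph of $\mathfrak{L}_2(G)$ on the four edges of $\mathcal{L}(G)$ incident to $e$, with all edges of $\mathfrak{L}_2(G)$ among them (a 4-cycle); $\mathcal{X}$ is the set of reduced cliques. A labeling $\Lambda$ gives each edge of $\mathfrak{L}_2(G)$ a label in $\{0,1\}$ ($1$ = open); it is valid if in every reduced clique each vertex is incident to two edges of that clique with different labels. $\Gamma_\Lambda$ is the set of connected components (cycles, viewed as subgraphs) of the subgraph formed by open edges. Two cycles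 $\gamma,\phi\in\Gamma_\Lambda$ are adjacent if some reduced clique contains an edge of $\gamma$ and an edge of $\phi$. The label inversion $\mathcal{F}_{\mathbb{X}}(\Lambda)$ is obtained from $\Lambda$ by replacing $\lambda_f$ with $1-\lambda_f$ for each edge $f$ of $\mathbb{X}$, other labels unchanged; it is again a valid labeling. *)

theory Defs
  imports Main
begin

definition simple_graph :: "'a set \<Rightarrow> 'a set set \<Rightarrow> bool" where
  "simple_graph V E \<longleftrightarrow> (\<forall>e\<in>E. \<exists>u v. u \<noteq> v \<and> u \<in> V \<and> v \<in> V \<and> e = {u, v})"

definition reachable :: "'a set set \<Rightarrow> 'a \<Rightarrow> 'a \<Rightarrow> bool" where
  "reachable E u v \<longleftrightarrow> (\<lambda>x y. {x, y} \<in> E)\<^sup>*\<^sup>* u v"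

definition connected_graph :: "'a set \<Rightarrow> 'a set set \<Rightarrow> bool" where
  "connected_graph V E \<longleftrightarrow> (\<forall>u\<in>V. \<forall>v\<in>V. reachable E u v)"

definition bridgeless :: "'a set \<Rightarrow> 'a set set \<Rightarrow> bool" where
  "bridgeless V E \<longleftrightarrow> (\<forall>e\<in>E. connected_graph V (E - {e}))"

definition triangle_free :: "'a set set \<Rightarrow> bool" where
  "triangle_free E \<longleftrightarrow>
     \<not> (\<exists>u v w. u \<noteq> v \<and> v \<noteq> w \<and> u \<noteq> w \<and> {u, v} \<in> E \<and> {v, w} \<in> E \<and> {u, w} \<in> E)"

definition cubic :: "'a set \<Rightarrow> 'a set set \<Rightarrow> bool" where
  "cubic V E \<longleftrightarrow> (\<forall>v\<in>V. card {e\<in>E. v \<in> e} = 3)"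

definition lg_edges :: "'b set set \<Rightarrow> 'b set set set" where
  "lg_edges F = {{e, f} | e f. e \<in> F \<and> f \<in> F \<and> e \<noteq> f \<and> e \<inter> f \<noteq> {}}"

definition triangles :: "'b set set \<Rightarrow> 'b set set" where
  "triangles F = {{x, y, z} | x y z. x \<noteq> y \<and> y \<noteq> z \<and> x \<noteq> z \<and>
                     {x, y} \<in> F \<and> {y, z} \<in> F \<and> {x, z} \<in> F}"

text \<open>The set T: triangles of L(L(G)) formed by the three edges of a triangle of L(G).\<close>
definition calT :: "'a set set \<Rightarrow> 'a set set set set" where
  "calT E = (\<lambda>t. {\<epsilon> \<in> lg_edges E. \<epsilon> \<subseteq> t}) ` triangles (lg_edges E)"

text \<open>L_2(G): vertex set lg_edges E (vertices of L(L(G))), edges of L(L(G))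
  not contained in any triangle of T.\<close>
definition L2_edges :: "'a set set \<Rightarrow> 'a set set set set" where
  "L2_edges E = {\<epsilon> \<in> lg_edges (lg_edges E). \<not> (\<exists>\<tau>\<in>calT E. \<epsilon> \<subseteq> \<tau>)}"

definition rc_verts :: "'a set set \<Rightarrow> 'a set \<Rightarrow> 'a set set set" where
  "rc_verts E e = {p \<in> lg_edges E. e \<in> p}"

definition rc_edges :: "'a set set \<Rightarrow> 'a set \<Rightarrow> 'a set set set set" where
  "rc_edges E e = {\<epsilon> \<in> L2_edges E. \<epsilon> \<subseteq> rc_verts E e}"

definition reduced_cliques :: "'a set set \<Rightarrow> ('a set set set \<times> 'a set set set set) set" where
  "reduced_cliques E = (\<lambda>e. (rc_verts E e, rc_edges E e)) ` E"

type_synonym 'a labeling = "'a set set set \<Rightarrow> nat"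

definition valid_labeling :: "'a set set \<Rightarrow> 'a labeling \<Rightarrow> bool" where
  "valid_labeling E \<Lambda> \<longleftrightarrow>
     (\<forall>f\<in>L2_edges E. \<Lambda> f \<in> {0, 1}) \<and>
     (\<forall>X\<in>reduced_cliques E. \<forall>p\<in>fst X.
        \<exists>f\<in>snd X. \<exists>g\<in>snd X. p \<in> f \<and> p \<in> g \<and> \<Lambda> f \<noteq> \<Lambda> g)"

definition open_edges :: "'a set set \<Rightarrow> 'a labeling \<Rightarrow> 'a set set set set" where
  "open_edges E \<Lambda> = {f \<in> L2_edges E. \<Lambda> f = 1}"

text \<open>Gamma_Lambda: connected components (as subgraphs: vertex set, edge set) of the
  subgraph formed by the open edges.\<close>
definition cycles :: "'a set set \<Rightarrow> 'a labeling \<Rightarrow> ('a set set set \<times> 'a set set set set) set" where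
  "cycles E \<Lambda> =
     {(C, {f \<in> open_edges E \<Lambda>. f \<subseteq> C}) | C.
        \<exists>p\<in>\<Union>(open_edges E \<Lambda>). C = {q. (\<lambda>x y. {x, y} \<in> open_edges E \<Lambda>)\<^sup>*\<^sup>* p q}}"

definition adjacent_cycles :: "'a set set \<Rightarrow> ('a set set set \<times> 'a set set set set)
    \<Rightarrow> ('a set set set \<times> 'a set set set set) \<Rightarrow> bool" where
  "adjacent_cycles E \<gamma> \<phi> \<longleftrightarrow> \<gamma> \<noteq> \<phi> \<and>
     (\<exists>X\<in>reduced_cliques E. \<exists>f\<in>snd \<gamma>. \<exists>g\<in>snd \<phi>. f \<in> snd X \<and> g \<in> snd X)"

definition label_inversion :: "('a set set set \<times> 'a set set set set) \<Rightarrow> 'a labeling \<Rightarrow> 'a labeling" where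
  "label_inversion X \<Lambda> = (\<lambda>f. if f \<in> snd X then 1 - \<Lambda> f else \<Lambda> f)"

end

(*
  Among all walks in L(G) from an edge of G whose reduced clique gamma1 meets to an edge whose
  reduced clique gamma2 meets, take a shortest one, w_0, ..., w_k.  Minimality makes it an
  induced path whose interior edges have cliques met by neither cycle, and k > 0 because the
  cycles are not adjacent.  For 0 < i < k the pair {w_(i-1) w_i, w_i w_(i+1)} is an edge of
  L_2(G) in X_(w_i): it lies in no removed triangle, as w_(i-1) and w_(i+1) are not adjacent
  in L(G).  Inverting X_(w_i) whenever this edge is closed opens all of them.  By validity a
  cycle through a vertex of a reduced clique uses an edge of that clique, so gamma1 and gamma2
  meet none of the inverted cliques and survive.  The opened edges connect w_0 w_1 to
  w_(k-1) w_k, so one cycle passes through both, hence meets X_(w_0) and X_(w_k), and is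
  adjacent to gamma1 and gamma2.
*)
theory Submission
  imports Defs
begin

lemma lg_edgesE:
  assumes "x \<in> lg_edges F"
  obtains u v where "x = {u, v}" "u \<in> F" "v \<in> F" "u \<noteq> v" "u \<inter> v \<noteq> {}"
  using assms unfolding lg_edges_def by blast

lemma doubleton_in_lg_edges_iff:
  "{u, v} \<in> lg_edges F \<longleftrightarrow> u \<in> F \<and> v \<in> F \<and> u \<noteq> v \<and> u \<inter> v \<noteq> {}"
  unfolding lg_edges_def by (auto simp: doubleton_eq_iff)

definition reduced_clique :: "'a set set \<Rightarrow> 'a set \<Rightarrow> 'a set set set \<times> 'a set set set set" where
  "reduced_clique E e = (rc_verts E e, rc_edges E e)"

lemma reduced_cliques_eq: "reduced_cliques E = reduced_clique E ` E"
  unfolding reduced_cliques_def reduced_clique_def ..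

lemma rc_edges_imp_mem:
  assumes "f \<in> rc_edges E e"
  shows "e \<in> E"
proof -
  from assms have "f \<in> lg_edges (lg_edges E)" "f \<subseteq> rc_verts E e"
    unfolding rc_edges_def L2_edges_def by auto
  then obtain p where "p \<in> lg_edges E" "e \<in> p"
    by (auto simp: rc_verts_def elim!: lg_edgesE)
  then show ?thesis by (auto elim: lg_edgesE)
qed

text \<open>Two distinct vertices of the line graph share at most one edge of G.\<close>
lemma rc_edges_unique:
  assumes "f \<in> rc_edges E e" "f \<in> rc_edges E e'"
  shows "e = e'"
proof (rule ccontr)
  assume "e \<noteq> e'"
  from assms(1) have "f \<in> lg_edges (lg_edges E)"
    unfolding rc_edges_def L2_edges_def by simp
  then obtain p q where f: "f = {p, q}" "p \<in> lg_edges E" "q \<in> lg_edges E" "p \<noteq> q"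
    by (rule lg_edgesE)
  with assms have "e \<in> p" "e' \<in> p" "e \<in> q" "e' \<in> q"
    unfolding rc_edges_def rc_verts_def by auto
  with f(2,3) \<open>e \<noteq> e'\<close> have "p = {e, e'}" "q = {e, e'}"
    by (auto elim!: lg_edgesE)
  with f(4) show False by simp
qed

lemma L2_edge_in_rc_edges:
  assumes "f \<in> L2_edges E"
  obtains e where "f \<in> rc_edges E e"
proof -
  from assms have "f \<in> lg_edges (lg_edges E)" by (simp add: L2_edges_def)
  then obtain p q where "f = {p, q}" "p \<in> lg_edges E" "q \<in> lg_edges E" "p \<inter> q \<noteq> {}"
    by (rule lg_edgesE)
  then obtain e where "e \<in> p" "e \<in> q" "f = {p, q}" "p \<in> lg_edges E" "q \<in> lg_edges E" by blast
  with assms have "f \<in> rc_edges E e"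
    by (auto simp: rc_edges_def rc_verts_def)
  then show thesis by (rule that)
qed

text \<open>The triangles of L(L(G)) removed in L_2(G) come from triangles of L(G), and such a
  triangle containing {a, d} and {d, c} would make a and c adjacent in L(G).\<close>
lemma turn_in_rc_edges:
  assumes ad: "{a, d} \<in> lg_edges E" and dc: "{d, c} \<in> lg_edges E"
    and "a \<noteq> c" and ac: "{a, c} \<notin> lg_edges E"
  shows "{{a, d}, {d, c}} \<in> rc_edges E d"
proof -
  have "{a, d} \<noteq> {d, c}" using \<open>a \<noteq> c\<close> by (auto simp: doubleton_eq_iff)
  then have lg: "{{a, d}, {d, c}} \<in> lg_edges (lg_edges E)"
    using ad dc by (auto simp: doubleton_in_lg_edges_iff)
  have "\<not> {{a, d}, {d, c}} \<subseteq> \<tau>" if "\<tau> \<in> calT E" for \<tau>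
  proof
    assume sub: "{{a, d}, {d, c}} \<subseteq> \<tau>"
    from that obtain s where s: "s \<in> triangles (lg_edges E)" "\<tau> = {\<epsilon> \<in> lg_edges E. \<epsilon> \<subseteq> s}"
      unfolding calT_def by blast
    then obtain x y z where xyz: "s = {x, y, z}"
      "{x, y} \<in> lg_edges E" "{y, z} \<in> lg_edges E" "{x, z} \<in> lg_edges E"
      unfolding triangles_def by blast
    from sub s(2) xyz(1) have "a \<in> {x, y, z}" "c \<in> {x, y, z}" by auto
    with xyz(2-4) \<open>a \<noteq> c\<close> have "{a, c} \<in> lg_edges E"
      by (auto simp: insert_commute)
    with ac show False ..
  qed
  with lg have "{{a, d}, {d, c}} \<in> L2_edges E"
    unfolding L2_edges_def by blast
  with ad dc show ?thesis
    by (simp add: rc_edges_def rc_verts_def)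
qed

section \<open>Labelings and their cycles\<close>

lemma valid_labeling_open_edge:
  assumes "valid_labeling E \<Lambda>" "e \<in> E" "q \<in> rc_verts E e"
  obtains g where "g \<in> rc_edges E e" "q \<in> g" "\<Lambda> g = 1"
proof -
  have "reduced_clique E e \<in> reduced_cliques E"
    using assms(2) by (simp add: reduced_cliques_eq)
  then obtain f g where fg: "f \<in> rc_edges E e" "g \<in> rc_edges E e" "q \<in> f" "q \<in> g" "\<Lambda> f \<noteq> \<Lambda> g"
    using assms(1,3) unfolding valid_labeling_def reduced_clique_def by fastforce
  moreover have "\<Lambda> f \<in> {0, 1}" "\<Lambda> g \<in> {0, 1}"
    using assms(1) fg(1,2) unfolding valid_labeling_def rc_edges_def by auto
  ultimately show thesis using that by auto
qed

definition open_reach :: "'a set set \<Rightarrow> 'a labeling \<Rightarrow> 'a set set \<Rightarrow> 'a set set set" where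
  "open_reach E \<Lambda> p = {q. (\<lambda>x y. {x, y} \<in> open_edges E \<Lambda>)\<^sup>*\<^sup>* p q}"

definition open_component :: "'a set set \<Rightarrow> 'a labeling \<Rightarrow> 'a set set
    \<Rightarrow> 'a set set set \<times> 'a set set set set" where
  "open_component E \<Lambda> p = (open_reach E \<Lambda> p, {f \<in> open_edges E \<Lambda>. f \<subseteq> open_reach E \<Lambda> p})"

lemma cycles_eq: "cycles E \<Lambda> = open_component E \<Lambda> ` \<Union>(open_edges E \<Lambda>)"
  unfolding cycles_def open_component_def open_reach_def by blast

lemma open_edge_doubleton:
  assumes "f \<in> open_edges E \<Lambda>" "p \<in> f"
  obtains q where "f = {p, q}"
proof -
  from assms(1) have "f \<in> lg_edges (lg_edges E)"
    by (simp add: open_edges_def L2_edges_def)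
  then obtain u v where "f = {u, v}" by (rule lg_edgesE)
  with assms(2) that show thesis by (metis insert_commute insertE singletonD)
qed

lemma open_edge_in_component:
  assumes "f \<in> open_edges E \<Lambda>" "q \<in> f" "q \<in> open_reach E \<Lambda> p"
  shows "f \<in> snd (open_component E \<Lambda> p)"
proof -
  obtain q' where "f = {q, q'}" using assms(1,2) by (rule open_edge_doubleton)
  with assms show ?thesis
    by (auto simp: open_component_def open_reach_def intro: rtranclp.rtrancl_into_rtrancl)
qed

definition meets_clique :: "'a set set \<Rightarrow> 'a set set set \<times> 'a set set set set \<Rightarrow> 'a set \<Rightarrow> bool" where
  "meets_clique E \<gamma> e \<longleftrightarrow> (\<exists>f\<in>snd \<gamma>. f \<in> rc_edges E e)"

lemma meets_clique_imp_mem: "meets_clique E \<gamma> e \<Longrightarrow> e \<in> E"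
  unfolding meets_clique_def by (auto intro: rc_edges_imp_mem)

lemma adjacent_cycles_iff:
  "adjacent_cycles E \<gamma> \<phi> \<longleftrightarrow> \<gamma> \<noteq> \<phi> \<and> (\<exists>e\<in>E. meets_clique E \<gamma> e \<and> meets_clique E \<phi> e)"
  unfolding adjacent_cycles_def meets_clique_def reduced_cliques_eq reduced_clique_def by auto

lemma cycle_meets_some_clique:
  assumes "\<gamma> \<in> cycles E \<Lambda>"
  obtains e where "meets_clique E \<gamma> e"
proof -
  from assms obtain p f where \<gamma>: "\<gamma> = open_component E \<Lambda> p" and f: "f \<in> open_edges E \<Lambda>" "p \<in> f"
    by (auto simp: cycles_eq)
  have "p \<in> open_reach E \<Lambda> p" by (simp add: open_reach_def)
  with f have "f \<in> snd \<gamma>" unfolding \<gamma> by (rule open_edge_in_component)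
  moreover obtain e where "f \<in> rc_edges E e"
    using f(1) by (auto simp: open_edges_def elim: L2_edge_in_rc_edges)
  ultimately show thesis using that by (auto simp: meets_clique_def)
qed

lemma cycle_meets_clique_at_vertex:
  assumes "\<gamma> \<in> cycles E \<Lambda>" "valid_labeling E \<Lambda>" "e \<in> E" "q \<in> fst \<gamma>" "q \<in> rc_verts E e"
  shows "meets_clique E \<gamma> e"
proof -
  from assms(1) obtain p where \<gamma>: "\<gamma> = open_component E \<Lambda> p"
    by (auto simp: cycles_eq)
  obtain g where g: "g \<in> rc_edges E e" "q \<in> g" "\<Lambda> g = 1"
    using assms(2,3,5) by (rule valid_labeling_open_edge)
  then have "g \<in> open_edges E \<Lambda>"
    by (simp add: open_edges_def rc_edges_def)
  moreover have "q \<in> open_reach E \<Lambda> p"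
    using assms(4) by (simp add: \<gamma> open_component_def)
  ultimately have "g \<in> snd \<gamma>"
    unfolding \<gamma> using g(2) by (blast intro: open_edge_in_component)
  with g(1) show ?thesis by (auto simp: meets_clique_def)
qed

lemma rtranclp_cong_reachable:
  assumes "\<And>x y. R\<^sup>*\<^sup>* p x \<Longrightarrow> R x y \<longleftrightarrow> S x y"
  shows "R\<^sup>*\<^sup>* p q \<longleftrightarrow> S\<^sup>*\<^sup>* p q"
proof
  show "S\<^sup>*\<^sup>* p q" if "R\<^sup>*\<^sup>* p q"
    using that
  proof induction
    case (step y z)
    with assms[of y z] show ?case by (metis rtranclp.rtrancl_into_rtrancl)
  qed simp
  show "R\<^sup>*\<^sup>* p q" if "S\<^sup>*\<^sup>* p q"
    using that
  proof induction
    case (step y z)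
    with assms[of y z] show ?case by (metis rtranclp.rtrancl_into_rtrancl)
  qed simp
qed

lemma cycle_label_cong:
  assumes "\<gamma> \<in> cycles E \<Lambda>"
    and same: "\<And>f. f \<in> L2_edges E \<Longrightarrow> f \<inter> fst \<gamma> \<noteq> {} \<Longrightarrow> \<Lambda>' f = \<Lambda> f"
  shows "\<gamma> \<in> cycles E \<Lambda>'"
proof -
  from assms(1) obtain p f where \<gamma>: "\<gamma> = open_component E \<Lambda> p"
    and f: "f \<in> open_edges E \<Lambda>" "p \<in> f"
    by (auto simp: cycles_eq)
  let ?C = "open_reach E \<Lambda> p"
  have same_open: "f \<in> open_edges E \<Lambda>' \<longleftrightarrow> f \<in> open_edges E \<Lambda>" if "x \<in> f" "x \<in> ?C" for f x
  proof -
    from that have "f \<inter> fst \<gamma> \<noteq> {}" by (auto simp: \<gamma> open_component_def)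
    with same[of f] show ?thesis by (auto simp: open_edges_def)
  qed
  have reach: "?C = open_reach E \<Lambda>' p"
    unfolding open_reach_def
  proof (intro Collect_cong rtranclp_cong_reachable)
    fix x y
    assume "(\<lambda>x y. {x, y} \<in> open_edges E \<Lambda>)\<^sup>*\<^sup>* p x"
    then have "x \<in> ?C" by (simp add: open_reach_def)
    then show "{x, y} \<in> open_edges E \<Lambda> \<longleftrightarrow> {x, y} \<in> open_edges E \<Lambda>'"
      using same_open[of x "{x, y}"] by simp
  qed
  have "f \<in> open_edges E \<Lambda>' \<longleftrightarrow> f \<in> open_edges E \<Lambda>" if "f \<subseteq> ?C" for f
  proof (cases "f \<in> L2_edges E")
    case True
    then obtain x where "x \<in> f" by (auto simp: L2_edges_def elim!: lg_edgesE)
    with that show ?thesis by (intro same_open) auto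
  qed (simp add: open_edges_def)
  then have "open_component E \<Lambda>' p = \<gamma>"
    unfolding \<gamma> open_component_def reach[symmetric] by auto
  moreover have "f \<in> open_edges E \<Lambda>'"
    using same_open[OF f(2)] f(1) by (simp add: open_reach_def)
  ultimately show ?thesis
    using f(2) by (auto simp: cycles_eq)
qed

lemma foldr_label_inversion_reduced_cliques:
  assumes "distinct ds"
  shows "foldr label_inversion (map (reduced_clique E) ds) \<Lambda> f =
           (if \<exists>d\<in>set ds. f \<in> rc_edges E d then 1 - \<Lambda> f else \<Lambda> f)"
  using assms
proof (induction ds)
  case (Cons d ds)
  show ?case
  proof (cases "f \<in> rc_edges E d")
    case True
    with Cons.prems have "\<not> (\<exists>d'\<in>set ds. f \<in> rc_edges E d')"
      using rc_edges_unique by fastforce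
    with True Cons show ?thesis by (simp add: label_inversion_def reduced_clique_def)
  next
    case False
    with Cons show ?thesis by (simp add: label_inversion_def reduced_clique_def)
  qed
qed simp

lemma label_inversions_open:
  assumes ts: "\<forall>(d, t)\<in>set ts. t \<in> rc_edges E d" and "distinct (map fst ts)"
    and binary: "\<forall>f\<in>L2_edges E. \<Lambda> f \<in> {0, 1}"
  obtains Xs where "set Xs \<subseteq> reduced_cliques E"
    and "\<forall>(d, t)\<in>set ts. foldr label_inversion Xs \<Lambda> t = 1"
    and "\<And>f. \<forall>d\<in>fst ` set ts. f \<notin> rc_edges E d \<Longrightarrow> foldr label_inversion Xs \<Lambda> f = \<Lambda> f"
proof
  define ds where "ds = map fst (filter (\<lambda>(d, t). \<Lambda> t \<noteq> 1) ts)"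
  let ?\<Lambda>' = "foldr label_inversion (map (reduced_clique E) ds) \<Lambda>"
  have "distinct ds"
    unfolding ds_def using \<open>distinct (map fst ts)\<close> by (simp add: distinct_map_filter)
  note inversion = foldr_label_inversion_reduced_cliques[OF this]
  have ds_ts: "set ds \<subseteq> fst ` set ts" by (auto simp: ds_def)
  have "set ds \<subseteq> E"
  proof
    fix d assume "d \<in> set ds"
    then obtain t where "(d, t) \<in> set ts" using ds_ts by force
    with ts have "t \<in> rc_edges E d" by auto
    then show "d \<in> E" by (rule rc_edges_imp_mem)
  qed
  then show "set (map (reduced_clique E) ds) \<subseteq> reduced_cliques E"
    by (auto simp: reduced_cliques_eq)
  show "?\<Lambda>' f = \<Lambda> f" if "\<forall>d\<in>fst ` set ts. f \<notin> rc_edges E d" for f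
  proof -
    from that ds_ts have "\<not> (\<exists>d\<in>set ds. f \<in> rc_edges E d)" by blast
    then show ?thesis by (simp add: inversion)
  qed
  have in_ds: "d \<in> set ds \<longleftrightarrow> \<Lambda> t \<noteq> 1" if td: "(d, t) \<in> set ts" for d t
  proof
    assume "d \<in> set ds"
    then obtain t' where "(d, t') \<in> set ts" "\<Lambda> t' \<noteq> 1" by (auto simp: ds_def)
    moreover from this(1) td have "t' = t"
      by (rule eq_key_imp_eq_value[OF \<open>distinct (map fst ts)\<close>])
    ultimately show "\<Lambda> t \<noteq> 1" by simp
  next
    assume "\<Lambda> t \<noteq> 1"
    with td show "d \<in> set ds" by (force simp: ds_def)
  qed
  show "\<forall>(d, t)\<in>set ts. ?\<Lambda>' t = 1"
  proof clarify
    fix d t assume td: "(d, t) \<in> set ts"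
    then have t: "t \<in> rc_edges E d" using ts by auto
    then have "(\<exists>d'\<in>set ds. t \<in> rc_edges E d') \<longleftrightarrow> \<Lambda> t \<noteq> 1"
      using in_ds[OF td] rc_edges_unique by blast
    moreover have "\<Lambda> t \<in> {0, 1}"
      using t binary by (simp add: rc_edges_def)
    ultimately show "?\<Lambda>' t = 1" by (auto simp: inversion)
  qed
qed

section \<open>Shortest walks\<close>

definition walk_between :: "('b \<Rightarrow> 'b \<Rightarrow> bool) \<Rightarrow> 'b set \<Rightarrow> 'b set \<Rightarrow> 'b list \<Rightarrow> bool" where
  "walk_between R A B w \<longleftrightarrow> w \<noteq> [] \<and> successively R w \<and> hd w \<in> A \<and> last w \<in> B"

definition shortest_walk :: "('b \<Rightarrow> 'b \<Rightarrow> bool) \<Rightarrow> 'b set \<Rightarrow> 'b set \<Rightarrow> 'b list \<Rightarrow> bool" where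
  "shortest_walk R A B w \<longleftrightarrow>
     walk_between R A B w \<and> (\<forall>w'. walk_between R A B w' \<longrightarrow> length w \<le> length w')"

lemma rtranclp_imp_walk:
  assumes "R\<^sup>*\<^sup>* x y"
  obtains w where "w \<noteq> []" "hd w = x" "last w = y" "successively R w"
  using assms
proof (induction arbitrary: thesis rule: converse_rtranclp_induct)
  case base
  show ?case by (rule base[of "[y]"]) simp_all
next
  case (step x z)
  obtain w where "w \<noteq> []" "hd w = z" "last w = y" "successively R w"
    by (rule step.IH)
  with step.hyps(1) show ?case
    by (intro step.prems[of "x # w"]) (simp_all add: successively_Cons)
qed

lemma shortest_walk_exists:
  assumes "R\<^sup>*\<^sup>* a b" "a \<in> A" "b \<in> B"
  obtains w where "shortest_walk R A B w"
proof -
  obtain w0 where "walk_between R A B w0"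
    using assms by (auto simp: walk_between_def elim!: rtranclp_imp_walk)
  then show thesis
    using that ex_has_least_nat[of "walk_between R A B" w0 length]
    unfolding shortest_walk_def by blast
qed

lemma shortest_walk_le:
  "shortest_walk R A B w \<Longrightarrow> walk_between R A B w' \<Longrightarrow> length w \<le> length w'"
  unfolding shortest_walk_def by blast

lemma successively_splice:
  assumes "successively P (xs @ x # ys)" "successively P (us @ x # zs)"
  shows "successively P (xs @ x # zs)"
proof -
  from assms(1) have "successively P (xs @ [x])"
    using successively_append_iff[of P "xs @ [x]" ys] by simp
  moreover from assms(2) have "successively P (x # zs)"
    using successively_append_iff[of P us "x # zs"] by simp
  ultimately show ?thesis
    by (cases zs) (auto simp: successively_append_iff)
qed

lemma shortest_walk_distinct:
  assumes "shortest_walk R A B w"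
  shows "distinct w"
proof (rule ccontr)
  assume "\<not> distinct w"
  then obtain xs y ys zs where w: "w = xs @ y # ys @ y # zs"
    using not_distinct_decomp by fastforce
  have "walk_between R A B w"
    using assms by (simp add: shortest_walk_def)
  then have "walk_between R A B (xs @ y # zs)"
    using successively_splice[of R xs y "ys @ y # zs" "xs @ y # ys" zs]
    unfolding w walk_between_def by (cases xs; cases zs) auto
  with assms have "length w \<le> length (xs @ y # zs)"
    by (rule shortest_walk_le)
  then show False by (simp add: w)
qed

lemma shortest_walk_chordless:
  assumes "shortest_walk R A B (xs @ a # b # c # ys)"
  shows "\<not> R a c"
proof
  assume "R a c"
  have walk: "walk_between R A B (xs @ a # b # c # ys)"
    using assms by (simp add: shortest_walk_def)
  then have "successively R (c # ys)"
    using successively_append_iff[of R "xs @ [a, b]" "c # ys"] by (simp add: walk_between_def)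
  with \<open>R a c\<close> have "successively R (a # c # ys)" by simp
  with walk have "walk_between R A B (xs @ a # c # ys)"
    using successively_splice[of R xs a "b # c # ys" "[]" "c # ys"]
    unfolding walk_between_def by (cases xs; cases ys) auto
  with assms have "length (xs @ a # b # c # ys) \<le> length (xs @ a # c # ys)"
    by (rule shortest_walk_le)
  then show False by simp
qed

lemma shortest_walk_tl_notin_source:
  assumes "shortest_walk R A B w" "m \<in> set (tl w)"
  shows "m \<notin> A"
proof
  assume "m \<in> A"
  from assms(2) obtain x xs ys where w: "w = x # xs @ m # ys"
    by (cases w) (auto simp: in_set_conv_decomp)
  have "walk_between R A B w"
    using assms(1) by (simp add: shortest_walk_def)
  with \<open>m \<in> A\<close> have "walk_between R A B (m # ys)"
    using successively_splice[of R "[]" m "[]" "x # xs" ys]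
    unfolding w walk_between_def by (cases ys) auto
  with assms(1) have "length w \<le> length (m # ys)"
    by (rule shortest_walk_le)
  with w show False by simp
qed

lemma shortest_walk_butlast_notin_target:
  assumes "shortest_walk R A B w" "m \<in> set (butlast w)"
  shows "m \<notin> B"
proof
  assume "m \<in> B"
  from assms(2) obtain xs ys where w: "w = xs @ m # ys" "ys \<noteq> []"
    by (metis append.assoc append_Cons in_set_butlastD
        in_set_conv_decomp snoc_eq_iff_butlast)
  have "walk_between R A B w"
    using assms(1) by (simp add: shortest_walk_def)
  with \<open>m \<in> B\<close> have "walk_between R A B (xs @ [m])"
    using successively_splice[of R xs m ys "[]" "[]"]
    unfolding w walk_between_def by (cases xs) auto
  with assms(1) have "length w \<le> length (xs @ [m])"
    by (rule shortest_walk_le)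
  with w show False by simp
qed

lemma shortest_walk_interior_notin:
  assumes "shortest_walk R A B w" "m \<in> set (butlast (tl w))"
  shows "m \<notin> A" "m \<notin> B"
proof -
  from assms(2) have "m \<in> set (tl w)" by (rule in_set_butlastD)
  with assms(1) show "m \<notin> A" by (rule shortest_walk_tl_notin_source)
  from assms(2) have "m \<in> set (butlast w)"
    by (cases "butlast w") (auto simp: butlast_tl)
  with assms(1) show "m \<notin> B" by (rule shortest_walk_butlast_notin_target)
qed

fun turns :: "'b list \<Rightarrow> ('b \<times> 'b set set) list" where
  "turns (a # d # c # ws) = (d, {{a, d}, {d, c}}) # turns (d # c # ws)"
| "turns _ = []"

lemma map_fst_turns: "map fst (turns w) = butlast (tl w)"
  by (induction w rule: turns.induct) auto

lemma turns_decomp: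
  assumes "(d, t) \<in> set (turns w)"
  obtains xs a c ys where "w = xs @ a # d # c # ys" "t = {{a, d}, {d, c}}"
  using assms
proof (induction w arbitrary: thesis rule: turns.induct)
  case (1 a d' c ws)
  show ?case
  proof (cases "(d, t) = (d', {{a, d'}, {d', c}})")
    case True
    then show ?thesis by (intro "1.prems"(1)[of "[]" a c ws]) auto
  next
    case False
    with "1.prems"(2) have "(d, t) \<in> set (turns (d' # c # ws))" by auto
    then obtain xs a' c' ys where "d' # c # ws = xs @ a' # d # c' # ys" "t = {{a', d}, {d, c'}}"
      using "1.IH" by blast
    then show ?thesis by (intro "1.prems"(1)[of "a # xs" a' c' ys]) simp_all
  qed
qed simp_all

lemma rtranclp_turns:
  assumes "\<forall>(d, t)\<in>set (turns (a # b # ws)). t \<in> S" "a # b # ws = xs @ [y, z]"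
  shows "(\<lambda>p q. {p, q} \<in> S)\<^sup>*\<^sup>* {a, b} {y, z}"
  using assms
proof (induction ws arbitrary: a b xs)
  case Nil
  then show ?case by (cases xs) auto
next
  case (Cons c ws)
  have "\<forall>(d, t)\<in>set (turns (b # c # ws)). t \<in> S"
    using Cons.prems(1) by simp
  moreover from Cons.prems(2) obtain xs' where "b # c # ws = xs' @ [y, z]"
    by (cases xs) auto
  ultimately have "(\<lambda>p q. {p, q} \<in> S)\<^sup>*\<^sup>* {b, c} {y, z}"
    by (rule Cons.IH)
  moreover have "{{a, b}, {b, c}} \<in> S" using Cons.prems(1) by simp
  ultimately show ?case by (simp add: converse_rtranclp_into_rtranclp)
qed

section \<open>Opening a shortest path between two cycles\<close>

lemma line_graph_connected:
  assumes "simple_graph V E" "connected_graph V E" "e \<in> E" "e' \<in> E"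
  shows "(\<lambda>x y. {x, y} \<in> lg_edges E)\<^sup>*\<^sup>* e e'"
proof -
  let ?R = "\<lambda>x y. {x, y} \<in> lg_edges E"
  have meet: "?R\<^sup>*\<^sup>* f f'" if "f \<in> E" "f' \<in> E" "f \<inter> f' \<noteq> {}" for f f'
    using that by (cases "f = f'") (auto simp: doubleton_in_lg_edges_iff)
  obtain u v where e: "e = {u, v}" "u \<in> V"
    using assms(1,3) unfolding simple_graph_def by blast
  obtain x y where e': "e' = {x, y}" "x \<in> V"
    using assms(1,4) unfolding simple_graph_def by blast
  from assms(2) e(2) e'(2) have "(\<lambda>x y. {x, y} \<in> E)\<^sup>*\<^sup>* u x"
    unfolding connected_graph_def reachable_def by blast
  then have "\<exists>f\<in>E. x \<in> f \<and> ?R\<^sup>*\<^sup>* e f"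
  proof (induction rule: rtranclp_induct)
    case base
    show ?case using assms(3) e(1) by blast
  next
    case (step y z)
    then obtain f where f: "f \<in> E" "y \<in> f" "?R\<^sup>*\<^sup>* e f" by blast
    with step.hyps(2) have "?R\<^sup>*\<^sup>* f {y, z}" by (intro meet) auto
    with f(3) step.hyps(2) show ?case by (meson insertI1 insertI2 rtranclp_trans singletonI)
  qed
  then obtain f where f: "f \<in> E" "x \<in> f" "?R\<^sup>*\<^sup>* e f" by blast
  with assms(4) e'(1) have "?R\<^sup>*\<^sup>* f e'" by (intro meet) auto
  with f(3) show ?thesis by (rule rtranclp_trans)
qed

lemma turns_in_rc_edges_shortest_walk:
  assumes "shortest_walk (\<lambda>x y. {x, y} \<in> lg_edges E) A B w"
  shows "\<forall>(d, t)\<in>set (turns w). t \<in> rc_edges E d"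
proof clarify
  fix d t assume "(d, t) \<in> set (turns w)"
  then obtain xs a c ys where w: "w = xs @ a # d # c # ys" and t: "t = {{a, d}, {d, c}}"
    by (rule turns_decomp)
  from assms have "successively (\<lambda>x y. {x, y} \<in> lg_edges E) w"
    by (simp add: shortest_walk_def walk_between_def)
  then have "{a, d} \<in> lg_edges E" "{d, c} \<in> lg_edges E"
    by (simp_all add: w successively_append_iff)
  moreover have "a \<noteq> c"
    using shortest_walk_distinct[OF assms] by (simp add: w)
  moreover have "{a, c} \<notin> lg_edges E"
    using assms unfolding w by (rule shortest_walk_chordless)
  ultimately show "t \<in> rc_edges E d"
    unfolding t by (rule turn_in_rc_edges)
qed

lemma cycle_preserved_avoiding_cliques:
  assumes "\<gamma> \<in> cycles E \<Lambda>" "valid_labeling E \<Lambda>"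
    and same: "\<And>f. \<forall>d\<in>D. f \<notin> rc_edges E d \<Longrightarrow> \<Lambda>' f = \<Lambda> f"
    and avoid: "\<forall>d\<in>D. \<not> meets_clique E \<gamma> d"
  shows "\<gamma> \<in> cycles E \<Lambda>'"
  using assms(1)
proof (rule cycle_label_cong)
  fix f assume "f \<inter> fst \<gamma> \<noteq> {}"
  then obtain q where q: "q \<in> f" "q \<in> fst \<gamma>" by blast
  have "f \<notin> rc_edges E d" if "d \<in> D" for d
  proof
    assume f: "f \<in> rc_edges E d"
    then have "d \<in> E" "q \<in> rc_verts E d"
      using q(1) by (auto simp: rc_edges_def intro: rc_edges_imp_mem)
    with assms(1,2) q(2) have "meets_clique E \<gamma> d"
      by (intro cycle_meets_clique_at_vertex)
    with avoid that show False by blast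
  qed
  then show "\<Lambda>' f = \<Lambda> f" by (blast intro: same)
qed

lemma walk_between_disjointE:
  assumes "walk_between R A B w" "A \<inter> B = {}"
  obtains a b ws xs y z where "w = a # b # ws" "w = xs @ [y, z]" "a \<in> A" "z \<in> B" "R a b" "R y z"
proof -
  obtain a w' where aw: "w = a # w'"
    using assms(1) by (cases w) (auto simp: walk_between_def)
  obtain y' z where zw: "w = y' @ [z]"
    using assms(1) by (cases w rule: rev_cases) (auto simp: walk_between_def)
  have "w' \<noteq> []"
    using assms aw by (auto simp: walk_between_def)
  then obtain b ws where "w' = b # ws" by (cases w') auto
  moreover have "y' \<noteq> []"
    using assms zw by (auto simp: walk_between_def)
  then obtain xs y where "y' = xs @ [y]" by (cases y' rule: rev_cases) auto
  ultimately have w: "w = a # b # ws" "w = xs @ [y, z]"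
    using aw zw by simp_all
  moreover have "a \<in> A" using assms(1) aw by (simp add: walk_between_def)
  moreover have "z \<in> B" using assms(1) zw by (simp add: walk_between_def)
  moreover have succ: "successively R w"
    using assms(1) by (simp add: walk_between_def)
  then have "R a b" by (simp add: w(1))
  moreover from succ have "R y z" by (simp add: w(2) successively_append_iff)
  ultimately show thesis by (rule that)
qed

lemma valid_labeling_open_edge_kept:
  assumes "valid_labeling E \<Lambda>" "e \<in> E" "q \<in> rc_verts E e"
    and "\<And>f. f \<in> rc_edges E e \<Longrightarrow> \<Lambda>' f = \<Lambda> f"
  obtains g where "g \<in> rc_edges E e" "q \<in> g" "g \<in> open_edges E \<Lambda>'"
proof -
  obtain g where "g \<in> rc_edges E e" "q \<in> g" "\<Lambda> g = 1"
    using assms(1-3) by (rule valid_labeling_open_edge)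
  with assms(4) show thesis
    using that by (auto simp: open_edges_def rc_edges_def)
qed

lemma open_turns_connect_ends:
  assumes "\<forall>(d, t)\<in>set (turns w). t \<in> open_edges E \<Lambda>"
    and "w = a # b # ws" "w = xs @ [y, z]"
    and g: "g \<in> open_edges E \<Lambda>" "{a, b} \<in> g" and h: "h \<in> open_edges E \<Lambda>" "{y, z} \<in> h"
  shows "open_component E \<Lambda> {a, b} \<in> cycles E \<Lambda>"
    and "g \<in> snd (open_component E \<Lambda> {a, b})" "h \<in> snd (open_component E \<Lambda> {a, b})"
proof -
  have "(\<lambda>p q. {p, q} \<in> open_edges E \<Lambda>)\<^sup>*\<^sup>* {a, b} {y, z}"
    using assms(1-3) rtranclp_turns by metis
  then have "{y, z} \<in> open_reach E \<Lambda> {a, b}"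
    by (simp add: open_reach_def)
  moreover have "{a, b} \<in> open_reach E \<Lambda> {a, b}"
    by (simp add: open_reach_def)
  ultimately show "g \<in> snd (open_component E \<Lambda> {a, b})" "h \<in> snd (open_component E \<Lambda> {a, b})"
    using g h by (auto intro: open_edge_in_component)
  show "open_component E \<Lambda> {a, b} \<in> cycles E \<Lambda>"
    using g by (auto simp: cycles_eq)
qed

lemma open_along_shortest_walk:
  assumes valid: "valid_labeling E \<Lambda>" and "A \<inter> B = {}"
    and w: "shortest_walk (\<lambda>x y. {x, y} \<in> lg_edges E) A B w"
  obtains Xs where "set Xs \<subseteq> reduced_cliques E"
    and "\<And>f. \<forall>d\<in>set (butlast (tl w)). f \<notin> rc_edges E d \<Longrightarrow> foldr label_inversion Xs \<Lambda> f = \<Lambda> f"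
    and "\<exists>\<gamma>\<in>cycles E (foldr label_inversion Xs \<Lambda>).
           meets_clique E \<gamma> (hd w) \<and> meets_clique E \<gamma> (last w)"
proof -
  have "walk_between (\<lambda>x y. {x, y} \<in> lg_edges E) A B w"
    using w by (simp add: shortest_walk_def)
  then obtain a b ws xs y z where ab: "w = a # b # ws" and yz: "w = xs @ [y, z]"
    and "a \<in> A" "z \<in> B" and lg: "{a, b} \<in> lg_edges E" "{y, z} \<in> lg_edges E"
    using \<open>A \<inter> B = {}\<close> by (rule walk_between_disjointE)
  have distinct: "distinct (map fst (turns w))"
    using shortest_walk_distinct[OF w] by (simp add: map_fst_turns distinct_butlast distinct_tl)
  have binary: "\<forall>f\<in>L2_edges E. \<Lambda> f \<in> {0, 1}"
    using valid by (simp add: valid_labeling_def)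
  have interior: "fst ` set (turns w) = set (butlast (tl w))"
    by (metis list.set_map map_fst_turns)
  obtain Xs where Xs: "set Xs \<subseteq> reduced_cliques E"
      "\<forall>(d, t)\<in>set (turns w). foldr label_inversion Xs \<Lambda> t = 1"
      "\<And>f. \<forall>d\<in>set (butlast (tl w)). f \<notin> rc_edges E d \<Longrightarrow> foldr label_inversion Xs \<Lambda> f = \<Lambda> f"
    by (rule label_inversions_open[OF turns_in_rc_edges_shortest_walk[OF w] distinct binary,
          unfolded interior]) blast
  define \<Lambda>' where "\<Lambda>' = foldr label_inversion Xs \<Lambda>"
  have kept: "\<Lambda>' f = \<Lambda> f" if "f \<in> rc_edges E e" "e \<notin> set (butlast (tl w))" for f e
  proof -
    from that have "\<forall>d\<in>set (butlast (tl w)). f \<notin> rc_edges E d"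
      using rc_edges_unique by blast
    then show ?thesis unfolding \<Lambda>'_def by (rule Xs(3))
  qed
  have "a \<notin> set (butlast (tl w))" "z \<notin> set (butlast (tl w))"
    using \<open>a \<in> A\<close> \<open>z \<in> B\<close> shortest_walk_interior_notin[OF w] by blast+
  with kept have kept_ends: "\<And>f. f \<in> rc_edges E a \<Longrightarrow> \<Lambda>' f = \<Lambda> f"
    "\<And>f. f \<in> rc_edges E z \<Longrightarrow> \<Lambda>' f = \<Lambda> f" by blast+
  have "a \<in> E" "{a, b} \<in> rc_verts E a" "z \<in> E" "{y, z} \<in> rc_verts E z"
    using lg by (auto simp: rc_verts_def doubleton_in_lg_edges_iff)
  then obtain g h where g: "g \<in> rc_edges E a" "{a, b} \<in> g" "g \<in> open_edges E \<Lambda>'"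
    and h: "h \<in> rc_edges E z" "{y, z} \<in> h" "h \<in> open_edges E \<Lambda>'"
    using valid_labeling_open_edge_kept[OF valid _ _ kept_ends(1)]
      valid_labeling_open_edge_kept[OF valid _ _ kept_ends(2)] by metis
  have "\<forall>(d, t)\<in>set (turns w). t \<in> open_edges E \<Lambda>'"
  proof clarify
    fix d t assume "(d, t) \<in> set (turns w)"
    with Xs(2) turns_in_rc_edges_shortest_walk[OF w] have "\<Lambda>' t = 1" "t \<in> rc_edges E d"
      by (auto simp: \<Lambda>'_def)
    then show "t \<in> open_edges E \<Lambda>'"
      by (simp add: open_edges_def rc_edges_def)
  qed
  note component = open_turns_connect_ends[OF this ab yz g(3,2) h(3,2)]
  have "hd w = a" using ab by simp
  moreover have "last w = z" using yz by simp
  ultimately show thesis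
    using that[OF Xs(1,3)] component g(1) h(1) by (auto simp: \<Lambda>'_def meets_clique_def)
qed

theorem proposition2p21:
  fixes V :: "'a set" and E :: "'a set set" and \<Lambda> :: "'a labeling"
    and \<gamma>1 \<gamma>2 :: "'a set set set \<times> 'a set set set set"
  assumes "finite V" and "simple_graph V E" and "connected_graph V E"
    and "bridgeless V E" and "triangle_free E" and "cubic V E"
    and "valid_labeling E \<Lambda>"
    and "\<gamma>1 \<in> cycles E \<Lambda>" and "\<gamma>2 \<in> cycles E \<Lambda>" and "\<gamma>1 \<noteq> \<gamma>2"
    and "\<not> adjacent_cycles E \<gamma>1 \<gamma>2"
  shows "\<exists>Xs. set Xs \<subseteq> reduced_cliques E \<and>
           (let \<Lambda>' = foldr label_inversion Xs \<Lambda> in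
              \<gamma>1 \<in> cycles E \<Lambda>' \<and> \<gamma>2 \<in> cycles E \<Lambda>' \<and>
              (\<exists>\<gamma>3\<in>cycles E \<Lambda>'. adjacent_cycles E \<gamma>3 \<gamma>1 \<and> adjacent_cycles E \<gamma>3 \<gamma>2))"
proof -
  define A where "A = {e. meets_clique E \<gamma>1 e}"
  define B where "B = {e. meets_clique E \<gamma>2 e}"
  have "A \<inter> B = {}"
  proof (rule ccontr)
    assume "A \<inter> B \<noteq> {}"
    then obtain e where "meets_clique E \<gamma>1 e" "meets_clique E \<gamma>2 e"
      by (auto simp: A_def B_def)
    with assms(10) have "adjacent_cycles E \<gamma>1 \<gamma>2"
      by (auto simp: adjacent_cycles_iff dest: meets_clique_imp_mem)
    with assms(11) show False ..
  qed
  obtain e1 where e1: "meets_clique E \<gamma>1 e1"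
    by (rule cycle_meets_some_clique[OF assms(8)])
  obtain e2 where e2: "meets_clique E \<gamma>2 e2"
    by (rule cycle_meets_some_clique[OF assms(9)])
  have "(\<lambda>x y. {x, y} \<in> lg_edges E)\<^sup>*\<^sup>* e1 e2"
    using assms(2,3) e1 e2 by (intro line_graph_connected meets_clique_imp_mem)
  moreover have "e1 \<in> A" "e2 \<in> B"
    using e1 e2 unfolding A_def B_def by blast+
  ultimately obtain w where w: "shortest_walk (\<lambda>x y. {x, y} \<in> lg_edges E) A B w"
    by (rule shortest_walk_exists)
  obtain Xs where Xs: "set Xs \<subseteq> reduced_cliques E"
    and same: "\<And>f. \<forall>d\<in>set (butlast (tl w)). f \<notin> rc_edges E d \<Longrightarrow> foldr label_inversion Xs \<Lambda> f = \<Lambda> f"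
    and "\<exists>\<gamma>\<in>cycles E (foldr label_inversion Xs \<Lambda>). meets_clique E \<gamma> (hd w) \<and> meets_clique E \<gamma> (last w)"
    by (rule open_along_shortest_walk[OF assms(7) \<open>A \<inter> B = {}\<close> w]) blast
  then obtain \<gamma>3 where \<gamma>3: "\<gamma>3 \<in> cycles E (foldr label_inversion Xs \<Lambda>)"
    "hd w \<in> {e. meets_clique E \<gamma>3 e}" "last w \<in> {e. meets_clique E \<gamma>3 e}" by auto
  have "\<forall>d\<in>set (butlast (tl w)). \<not> meets_clique E \<gamma>1 d \<and> \<not> meets_clique E \<gamma>2 d"
    using shortest_walk_interior_notin[OF w] unfolding A_def B_def by blast
  then have "\<gamma>1 \<in> cycles E (foldr label_inversion Xs \<Lambda>)" "\<gamma>2 \<in> cycles E (foldr label_inversion Xs \<Lambda>)"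
    using cycle_preserved_avoiding_cliques[OF assms(8) assms(7) same] cycle_preserved_avoiding_cliques[OF assms(9) assms(7) same] by blast+
  moreover have "hd w \<in> A" "last w \<in> B"
    using w by (simp_all add: shortest_walk_def walk_between_def)
  with \<gamma>3(2,3) \<open>A \<inter> B = {}\<close> have "adjacent_cycles E \<gamma>3 \<gamma>1" "adjacent_cycles E \<gamma>3 \<gamma>2"
    unfolding adjacent_cycles_iff A_def B_def by (blast dest: meets_clique_imp_mem)+
  ultimately show ?thesis
    using Xs \<gamma>3(1) unfolding Let_def by blast
qed

end
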